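(* Let $\mathcal C,\mathcal D$ be parsummable categories and $F\colon\mathcal C\to\mathcal D$ a functor of underlying categories that preserves sums. Then $F_*\mathcal C$ (described below) is a well-defined parsummable category.
   Context: Let $\omega=\{1,2,\dots\}$, $\mathcal M$ the monoid of injections $\omega\to\omega$, $E\mathcal M$ the category with objects $\mathcal M$ and unique morphisms between any two objects. An $E\mathcal M$-category is a small category with a strict $E\mathcal M$-action ($u_*$ the action of $u$, $[v,u]\colon u_*\Rightarrow v_*$, $u^X_\circ=[u,1]_X$). Such an action is uniquely determined by an $\mathcal M$-action on objects together with isomorphisms $u^X_\circ\colon X\to u_*X$ satisfying $(uv)^X_\circ=u^{v_*X}_\circ v^X_\circ$. $\mathrm{supp}(X)$ is the intersection of the finite $A\subset\omega$ such that $u_*X=X$ for all $u$ fixing $A$ pointwise; tame means all supports finite. A parsummable category is a tame $E\mathcal M$-category with an object $0$ of empty support and a functor $+$ on the full subcategory $\mathcal C\boxtimes\mathcal C\subset\mathcal C\times\mathcal C$ of disjointly supported pairs, strictly unital, associative, commutative and $E\mathcal M$-equivariant ($u_*(X+Y)=u_*X+u_*Y$, $u^{X+Y}_\circ=u^X_\circ+u^Y_\circ$). A functor $F\colon\mathcal C\to\mathcal D$ of underlying categories preserves sums if $F(0)=0$, $F\times F$ maps $\mathcal C\boxtimes\mathcal C$ into $\mathcal D\boxtimes\mathcal D$, and $F(X+Y)=F(X)+F(Y)$, $F(f+g)=F(f)+F(g)$ for all summable objects and morphisms. $F_*\mathcal C$: objects are the objects of $\mathcal C$; $\mathrm{Hom}_{F_*\mathcal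 C}(X,Y)=\mathrm{Hom}_{\mathcal D}(FX,FY)$ with composition in $\mathcal D$; the $\mathcal M$-action on objects is that of $\mathcal C$, and $u^X_\circ$ is $F(u^X_\circ)\colon F(X)\to F(u_*X)$; the sum of objects is the sum in $\mathcal C$ (with unit $0$), and the sum of morphisms is the sum in $\mathcal D$. *)

theory Defs
  imports Main
begin

text \<open>Small categories are presented by a carrier of objects, hom-sets indexed by
  pairs of objects, identities and a (totally defined, but only constrained on
  composable pairs) composition.\<close>

record ('o, 'm) pcat =
  Ob    :: "'o set"
  Hom   :: "'o \<Rightarrow> 'o \<Rightarrow> 'm set"
  Id    :: "'o \<Rightarrow> 'm"
  Comp  :: "'m \<Rightarrow> 'm \<Rightarrow> 'm"
  Act   :: "(nat \<Rightarrow> nat) \<Rightarrow> 'o \<Rightarrow> 'o"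
  Circ  :: "(nat \<Rightarrow> nat) \<Rightarrow> 'o \<Rightarrow> 'm"
  Zero  :: "'o"
  PlusO :: "'o \<Rightarrow> 'o \<Rightarrow> 'o"
  PlusM :: "'m \<Rightarrow> 'm \<Rightarrow> 'm"

text \<open>The monoid of injective self-maps of the countable set omega, modelled by nat.\<close>
definition Mon :: "(nat \<Rightarrow> nat) set" where
  "Mon = {u. inj u}"

definition category :: "('o, 'm) pcat \<Rightarrow> bool" where
  "category C \<longleftrightarrow>
     (\<forall>X\<in>Ob C. Id C X \<in> Hom C X X) \<and>
     (\<forall>X\<in>Ob C. \<forall>Y\<in>Ob C. \<forall>Z\<in>Ob C. \<forall>f g.
         f \<in> Hom C X Y \<and> g \<in> Hom C Y Z \<longrightarrow> Comp C g f \<in> Hom C X Z) \<and>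
     (\<forall>X\<in>Ob C. \<forall>Y\<in>Ob C. \<forall>f. f \<in> Hom C X Y \<longrightarrow>
         Comp C f (Id C X) = f \<and> Comp C (Id C Y) f = f) \<and>
     (\<forall>W\<in>Ob C. \<forall>X\<in>Ob C. \<forall>Y\<in>Ob C. \<forall>Z\<in>Ob C. \<forall>f g h.
         f \<in> Hom C W X \<and> g \<in> Hom C X Y \<and> h \<in> Hom C Y Z \<longrightarrow>
         Comp C h (Comp C g f) = Comp C (Comp C h g) f)"

definition is_iso :: "('o, 'm) pcat \<Rightarrow> 'o \<Rightarrow> 'o \<Rightarrow> 'm \<Rightarrow> bool" where
  "is_iso C X Y f \<longleftrightarrow> f \<in> Hom C X Y \<and>
     (\<exists>g\<in>Hom C Y X. Comp C g f = Id C X \<and> Comp C f g = Id C Y)"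

text \<open>EM-category, given (as in the paper) by an M-action on objects together with
  isomorphisms u_circ^X : X \<rightarrow> u_* X satisfying the cocycle condition.\<close>
definition em_category :: "('o, 'm) pcat \<Rightarrow> bool" where
  "em_category C \<longleftrightarrow> category C \<and>
     (\<forall>u\<in>Mon. \<forall>X\<in>Ob C. Act C u X \<in> Ob C) \<and>
     (\<forall>X\<in>Ob C. Act C id X = X) \<and>
     (\<forall>u\<in>Mon. \<forall>v\<in>Mon. \<forall>X\<in>Ob C. Act C (u \<circ> v) X = Act C u (Act C v X)) \<and>
     (\<forall>u\<in>Mon. \<forall>X\<in>Ob C. is_iso C X (Act C u X) (Circ C u X)) \<and>
     (\<forall>u\<in>Mon. \<forall>v\<in>Mon. \<forall>X\<in>Ob C.
         Circ C (u \<circ> v) X = Comp C (Circ C u (Act C v X)) (Circ C v X))"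

definition supp :: "('o, 'm) pcat \<Rightarrow> 'o \<Rightarrow> nat set" where
  "supp C X = \<Inter> {A. finite A \<and> (\<forall>u\<in>Mon. (\<forall>a\<in>A. u a = a) \<longrightarrow> Act C u X = X)}"

definition tame :: "('o, 'm) pcat \<Rightarrow> bool" where
  "tame C \<longleftrightarrow> (\<forall>X\<in>Ob C. finite (supp C X))"

definition summable :: "('o, 'm) pcat \<Rightarrow> 'o \<Rightarrow> 'o \<Rightarrow> bool" where
  "summable C X Y \<longleftrightarrow> X \<in> Ob C \<and> Y \<in> Ob C \<and> supp C X \<inter> supp C Y = {}"

definition parsummable :: "('o, 'm) pcat \<Rightarrow> bool" where
  "parsummable C \<longleftrightarrow> em_category C \<and> tame C \<and>
     Zero C \<in> Ob C \<and> supp C (Zero C) = {} \<and>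
     \<comment> \<open>+ is a functor C \<boxtimes> C \<rightarrow> C\<close>
     (\<forall>X Y. summable C X Y \<longrightarrow> PlusO C X Y \<in> Ob C) \<and>
     (\<forall>X Y X' Y' f g. summable C X Y \<and> summable C X' Y' \<and>
         f \<in> Hom C X X' \<and> g \<in> Hom C Y Y' \<longrightarrow>
         PlusM C f g \<in> Hom C (PlusO C X Y) (PlusO C X' Y')) \<and>
     (\<forall>X Y. summable C X Y \<longrightarrow> PlusM C (Id C X) (Id C Y) = Id C (PlusO C X Y)) \<and>
     (\<forall>X Y X' Y' X'' Y'' f g f' g'. summable C X Y \<and> summable C X' Y' \<and>
         summable C X'' Y'' \<and> f \<in> Hom C X X' \<and> g \<in> Hom C Y Y' \<and>
         f' \<in> Hom C X' X'' \<and> g' \<in> Hom C Y' Y'' \<longrightarrow>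
         PlusM C (Comp C f' f) (Comp C g' g) = Comp C (PlusM C f' g') (PlusM C f g)) \<and>
     \<comment> \<open>strictly unital\<close>
     (\<forall>X\<in>Ob C. PlusO C X (Zero C) = X \<and> PlusO C (Zero C) X = X) \<and>
     (\<forall>X\<in>Ob C. \<forall>X'\<in>Ob C. \<forall>f. f \<in> Hom C X X' \<longrightarrow>
         PlusM C f (Id C (Zero C)) = f \<and> PlusM C (Id C (Zero C)) f = f) \<and>
     \<comment> \<open>associative\<close>
     (\<forall>X Y Z. summable C X Y \<and> summable C X Z \<and> summable C Y Z \<longrightarrow>
         PlusO C (PlusO C X Y) Z = PlusO C X (PlusO C Y Z)) \<and>
     (\<forall>X Y Z X' Y' Z' f g h. summable C X Y \<and> summable C X Z \<and> summable C Y Z \<and>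
         summable C X' Y' \<and> summable C X' Z' \<and> summable C Y' Z' \<and>
         f \<in> Hom C X X' \<and> g \<in> Hom C Y Y' \<and> h \<in> Hom C Z Z' \<longrightarrow>
         PlusM C (PlusM C f g) h = PlusM C f (PlusM C g h)) \<and>
     \<comment> \<open>commutative\<close>
     (\<forall>X Y. summable C X Y \<longrightarrow> PlusO C X Y = PlusO C Y X) \<and>
     (\<forall>X Y X' Y' f g. summable C X Y \<and> summable C X' Y' \<and>
         f \<in> Hom C X X' \<and> g \<in> Hom C Y Y' \<longrightarrow> PlusM C f g = PlusM C g f) \<and>
     \<comment> \<open>EM-equivariant\<close>
     (\<forall>u\<in>Mon. \<forall>X Y. summable C X Y \<longrightarrow>
         Act C u (PlusO C X Y) = PlusO C (Act C u X) (Act C u Y) \<and>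
         Circ C u (PlusO C X Y) = PlusM C (Circ C u X) (Circ C u Y))"

definition is_functor ::
    "('o, 'm) pcat \<Rightarrow> ('p, 'n) pcat \<Rightarrow> ('o \<Rightarrow> 'p) \<Rightarrow> ('m \<Rightarrow> 'n) \<Rightarrow> bool" where
  "is_functor C D Fo Fm \<longleftrightarrow>
     (\<forall>X\<in>Ob C. Fo X \<in> Ob D) \<and>
     (\<forall>X\<in>Ob C. \<forall>Y\<in>Ob C. \<forall>f. f \<in> Hom C X Y \<longrightarrow> Fm f \<in> Hom D (Fo X) (Fo Y)) \<and>
     (\<forall>X\<in>Ob C. Fm (Id C X) = Id D (Fo X)) \<and>
     (\<forall>X\<in>Ob C. \<forall>Y\<in>Ob C. \<forall>Z\<in>Ob C. \<forall>f g.
         f \<in> Hom C X Y \<and> g \<in> Hom C Y Z \<longrightarrow> Fm (Comp C g f) = Comp D (Fm g) (Fm f))"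

definition preserves_sums ::
    "('o, 'm) pcat \<Rightarrow> ('p, 'n) pcat \<Rightarrow> ('o \<Rightarrow> 'p) \<Rightarrow> ('m \<Rightarrow> 'n) \<Rightarrow> bool" where
  "preserves_sums C D Fo Fm \<longleftrightarrow>
     Fo (Zero C) = Zero D \<and>
     (\<forall>X Y. summable C X Y \<longrightarrow> summable D (Fo X) (Fo Y)) \<and>
     (\<forall>X Y. summable C X Y \<longrightarrow> Fo (PlusO C X Y) = PlusO D (Fo X) (Fo Y)) \<and>
     (\<forall>X Y X' Y' f g. summable C X Y \<and> summable C X' Y' \<and>
         f \<in> Hom C X X' \<and> g \<in> Hom C Y Y' \<longrightarrow>
         Fm (PlusM C f g) = PlusM D (Fm f) (Fm g))"

definition pushforward ::
    "('o, 'm) pcat \<Rightarrow> ('p, 'n) pcat \<Rightarrow> ('o \<Rightarrow> 'p) \<Rightarrow> ('m \<Rightarrow> 'n) \<Rightarrow> ('o, 'n) pcat" where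
  "pushforward C D Fo Fm =
     \<lparr> Ob = Ob C,
       Hom = (\<lambda>X Y. Hom D (Fo X) (Fo Y)),
       Id = (\<lambda>X. Id D (Fo X)),
       Comp = Comp D,
       Act = Act C,
       Circ = (\<lambda>u X. Fm (Circ C u X)),
       Zero = Zero C,
       PlusO = PlusO C,
       PlusM = PlusM D \<rparr>"

end

theory Submission
  imports Defs "HOL-Combinatorics.Transposition"
begin

text \<open>All structure of F_* C is borrowed either from C (objects, action, sum of objects) or
  from D (morphisms, sum of morphisms), so every axiom is an axiom of C, or one of D at the
  images under F, which are again summable because F preserves sums; the maps F(u_circ) stay
  invertible and satisfy the cocycle identity because F is a functor.  The one point needing
  thought is equivariance of the sum of morphisms: F(u_circ^(X+Y)) = F(u_circ^X + u_circ^Y)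
  splits as F(u_circ^X) + F(u_circ^Y) only if u_* X and u_* Y are again disjointly supported.
  This follows from supp(u_* X) \<subseteq> u(supp X) and injectivity of u, and the inclusion holds
  because u_* X only depends on u restricted to a finite support of X.\<close>

lemma finite_inj_on_extends_to_bij:
  fixes u :: "'a \<Rightarrow> 'a"
  assumes "finite A" and "inj_on u A"
  shows "\<exists>\<pi>. bij \<pi> \<and> (\<forall>a\<in>A. \<pi> a = u a)"
  using assms
proof (induction A rule: finite_induct)
  case empty
  show ?case using bij_id by blast
next
  case (insert a A)
  then obtain \<pi> where "bij \<pi>" and \<pi>: "\<forall>x\<in>A. \<pi> x = u x" by auto
  define \<sigma> where "\<sigma> = transpose (\<pi> a) (u a) \<circ> \<pi>"
  have "bij \<sigma>" unfolding \<sigma>_def using \<open>bij \<pi>\<close> by (simp add: bij_comp)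
  moreover have "\<sigma> x = u x" if "x \<in> insert a A" for x
  proof (cases "x = a")
    case False
    with that have "x \<in> A" by simp
    moreover have "\<pi> x \<noteq> \<pi> a" using \<open>bij \<pi>\<close> False by (metis bij_is_inj injD)
    moreover have "u x \<noteq> u a" using insert.prems \<open>x \<in> A\<close> \<open>a \<notin> A\<close> by (metis inj_on_contraD insertCI)
    ultimately show ?thesis using \<pi> by (simp add: \<sigma>_def)
  qed (simp add: \<sigma>_def)
  ultimately show ?case by blast
qed

lemma Mon_comp: "u \<in> Mon \<Longrightarrow> v \<in> Mon \<Longrightarrow> u \<circ> v \<in> Mon"
  by (simp add: Mon_def inj_compose)

lemma em_categoryD:
  assumes "em_category C"
  shows em_category_category: "category C"
    and em_category_act_closed: "\<And>u X. u \<in> Mon \<Longrightarrow> X \<in> Ob C \<Longrightarrow> Act C u X \<in> Ob C"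
    and em_category_act_id: "\<And>X. X \<in> Ob C \<Longrightarrow> Act C id X = X"
    and em_category_act_comp:
      "\<And>u v X. u \<in> Mon \<Longrightarrow> v \<in> Mon \<Longrightarrow> X \<in> Ob C \<Longrightarrow> Act C (u \<circ> v) X = Act C u (Act C v X)"
    and em_category_circ_iso: "\<And>u X. u \<in> Mon \<Longrightarrow> X \<in> Ob C \<Longrightarrow> is_iso C X (Act C u X) (Circ C u X)"
    and em_category_circ_comp:
      "\<And>u v X. u \<in> Mon \<Longrightarrow> v \<in> Mon \<Longrightarrow> X \<in> Ob C \<Longrightarrow>
         Circ C (u \<circ> v) X = Comp C (Circ C u (Act C v X)) (Circ C v X)"
  using assms by (simp_all add: em_category_def)

lemma em_category_circ_hom:
  "em_category C \<Longrightarrow> u \<in> Mon \<Longrightarrow> X \<in> Ob C \<Longrightarrow> Circ C u X \<in> Hom C X (Act C u X)"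
  using em_category_circ_iso is_iso_def by metis

definition supports :: "('o, 'm) pcat \<Rightarrow> nat set \<Rightarrow> 'o \<Rightarrow> bool" where
  "supports C A X \<longleftrightarrow> (\<forall>u\<in>Mon. (\<forall>a\<in>A. u a = a) \<longrightarrow> Act C u X = X)"

lemma supp_eq_Inter_supports: "supp C X = \<Inter> {A. finite A \<and> supports C A X}"
  by (simp add: supp_def supports_def)

text \<open>Extend u restricted to A to a bijection \<pi>; every t agreeing with u on A factors as
  \<pi> \<circ> (inv \<pi> \<circ> t), where the second factor fixes A pointwise.\<close>
lemma act_eq_on_support:
  assumes "em_category C" and "X \<in> Ob C" and "finite A" and "supports C A X"
    and "u \<in> Mon" and "w \<in> Mon" and "\<forall>a\<in>A. u a = w a"
  shows "Act C u X = Act C w X"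
proof -
  obtain \<pi> where "bij \<pi>" and \<pi>: "\<forall>a\<in>A. \<pi> a = u a"
    using finite_inj_on_extends_to_bij[OF \<open>finite A\<close> inj_on_subset[of u UNIV A]] \<open>u \<in> Mon\<close>
    by (auto simp: Mon_def)
  have "Act C t X = Act C \<pi> X" if "t \<in> Mon" and t: "\<forall>a\<in>A. t a = u a" for t
  proof -
    have "inv \<pi> \<circ> t \<in> Mon"
      using \<open>bij \<pi>\<close> \<open>t \<in> Mon\<close> by (simp add: Mon_def bij_imp_bij_inv bij_is_inj inj_compose)
    moreover have "\<forall>a\<in>A. (inv \<pi> \<circ> t) a = a"
      using \<pi> t \<open>bij \<pi>\<close> by (metis bij_is_inj comp_apply inv_f_f)
    ultimately have "Act C (inv \<pi> \<circ> t) X = X"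
      using \<open>supports C A X\<close> by (simp add: supports_def)
    moreover have "t = \<pi> \<circ> (inv \<pi> \<circ> t)"
      using \<open>bij \<pi>\<close> by (simp add: fun_eq_iff bij_is_surj surj_f_inv_f)
    ultimately show ?thesis
      using em_category_act_comp[OF \<open>em_category C\<close>] \<open>bij \<pi>\<close> \<open>inv \<pi> \<circ> t \<in> Mon\<close> \<open>X \<in> Ob C\<close>
      by (metis Mon_def bij_is_inj mem_Collect_eq)
  qed
  then show ?thesis using assms(5-7) by (metis \<pi>)
qed

lemma supports_act:
  assumes "em_category C" and "X \<in> Ob C" and "finite A" and "supports C A X" and "u \<in> Mon"
  shows "supports C (u ` A) (Act C u X)"
  unfolding supports_def
proof (intro ballI impI)
  fix v assume "v \<in> Mon" and "\<forall>a\<in>u ` A. v a = a"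
  then have "Act C (v \<circ> u) X = Act C u X"
    using act_eq_on_support[OF assms(1-4) Mon_comp \<open>u \<in> Mon\<close>] \<open>u \<in> Mon\<close> by simp
  then show "Act C v (Act C u X) = Act C u X"
    using em_category_act_comp[OF assms(1)] \<open>v \<in> Mon\<close> assms(2,5) by simp
qed

lemma supp_act_subset:
  assumes "em_category C" and "X \<in> Ob C" and "finite (supp C X)" and "u \<in> Mon"
  shows "supp C (Act C u X) \<subseteq> u ` supp C X"
proof -
  define S where "S = {A. finite A \<and> supports C A X}"
  have "supp C X = \<Inter> S" by (simp add: supp_eq_Inter_supports S_def)
  then have "S \<noteq> {}" using \<open>finite (supp C X)\<close> by auto
  have "u ` A \<in> {B. finite B \<and> supports C B (Act C u X)}" if "A \<in> S" for A
    using supports_act[OF assms(1,2) _ _ assms(4)] that by (simp add: S_def)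
  then have "supp C (Act C u X) \<subseteq> (\<Inter>A\<in>S. u ` A)"
    unfolding supp_eq_Inter_supports by blast
  also have "\<dots> = u ` \<Inter> S"
    using \<open>S \<noteq> {}\<close> \<open>u \<in> Mon\<close> image_INT[of u UNIV S "\<lambda>A. A"] by (auto simp: Mon_def)
  finally show ?thesis using \<open>supp C X = \<Inter> S\<close> by simp
qed

lemma summable_act:
  assumes "em_category C" and "tame C" and "summable C X Y" and "u \<in> Mon"
  shows "summable C (Act C u X) (Act C u Y)"
proof -
  have X: "X \<in> Ob C" and Y: "Y \<in> Ob C" and "supp C X \<inter> supp C Y = {}"
    using \<open>summable C X Y\<close> by (auto simp: summable_def)
  moreover have "inj u" using \<open>u \<in> Mon\<close> by (simp add: Mon_def)
  ultimately have "u ` supp C X \<inter> u ` supp C Y = {}"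
    by (simp flip: image_Int)
  moreover have "supp C (Act C u X) \<subseteq> u ` supp C X" and "supp C (Act C u Y) \<subseteq> u ` supp C Y"
    using supp_act_subset[OF assms(1) _ _ assms(4)] \<open>tame C\<close> X Y by (simp_all add: tame_def)
  ultimately have "supp C (Act C u X) \<inter> supp C (Act C u Y) = {}"
    by blast
  then show ?thesis
    using em_category_act_closed[OF assms(1,4)] X Y by (simp add: summable_def)
qed

lemma is_functorD:
  assumes "is_functor C D Fo Fm"
  shows functor_ob: "\<And>X. X \<in> Ob C \<Longrightarrow> Fo X \<in> Ob D"
    and functor_hom: "\<And>X Y f. X \<in> Ob C \<Longrightarrow> Y \<in> Ob C \<Longrightarrow> f \<in> Hom C X Y \<Longrightarrow> Fm f \<in> Hom D (Fo X) (Fo Y)"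
    and functor_id: "\<And>X. X \<in> Ob C \<Longrightarrow> Fm (Id C X) = Id D (Fo X)"
    and functor_comp: "\<And>X Y Z f g. X \<in> Ob C \<Longrightarrow> Y \<in> Ob C \<Longrightarrow> Z \<in> Ob C \<Longrightarrow>
      f \<in> Hom C X Y \<Longrightarrow> g \<in> Hom C Y Z \<Longrightarrow> Fm (Comp C g f) = Comp D (Fm g) (Fm f)"
  using assms by (simp_all add: is_functor_def)

lemma functor_is_iso:
  assumes "is_functor C D Fo Fm" and "X \<in> Ob C" and "Y \<in> Ob C" and "is_iso C X Y f"
  shows "is_iso D (Fo X) (Fo Y) (Fm f)"
proof -
  obtain g where "f \<in> Hom C X Y" and "g \<in> Hom C Y X"
    and "Comp C g f = Id C X" and "Comp C f g = Id C Y"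
    using \<open>is_iso C X Y f\<close> by (auto simp: is_iso_def)
  then show ?thesis
    unfolding is_iso_def using is_functorD[OF assms(1)] assms(2,3)
    by (metis (no_types, lifting))
qed

lemma pushforward_simps [simp]:
  "Ob (pushforward C D Fo Fm) = Ob C"
  "Hom (pushforward C D Fo Fm) X Y = Hom D (Fo X) (Fo Y)"
  "Id (pushforward C D Fo Fm) X = Id D (Fo X)"
  "Comp (pushforward C D Fo Fm) = Comp D"
  "Act (pushforward C D Fo Fm) = Act C"
  "Circ (pushforward C D Fo Fm) u X = Fm (Circ C u X)"
  "Zero (pushforward C D Fo Fm) = Zero C"
  "PlusO (pushforward C D Fo Fm) = PlusO C"
  "PlusM (pushforward C D Fo Fm) = PlusM D"
  by (simp_all add: pushforward_def)

lemma supp_pushforward [simp]: "supp (pushforward C D Fo Fm) = supp C"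
  by (simp add: supp_def fun_eq_iff)

lemma summable_pushforward [simp]: "summable (pushforward C D Fo Fm) = summable C"
  by (simp add: summable_def fun_eq_iff)

lemma is_iso_pushforward [simp]:
  "is_iso (pushforward C D Fo Fm) X Y f \<longleftrightarrow> is_iso D (Fo X) (Fo Y) f"
  by (simp add: is_iso_def)

lemma tame_pushforward [simp]: "tame (pushforward C D Fo Fm) = tame C"
  by (simp add: tame_def)

lemma category_pushforward:
  assumes "category D" and "\<And>X. X \<in> Ob C \<Longrightarrow> Fo X \<in> Ob D"
  shows "category (pushforward C D Fo Fm)"
  using assms unfolding category_def by (simp; meson)

lemma em_category_pushforward:
  assumes "em_category C" and "category D" and "is_functor C D Fo Fm"
  shows "em_category (pushforward C D Fo Fm)"
proof -
  have "Fm (Circ C (u \<circ> v) X) = Comp D (Fm (Circ C u (Act C v X))) (Fm (Circ C v X))"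
    if "u \<in> Mon" and "v \<in> Mon" and "X \<in> Ob C" for u v X
  proof -
    have "Act C v X \<in> Ob C" and "Act C u (Act C v X) \<in> Ob C"
      using em_category_act_closed[OF assms(1)] that by simp_all
    then show ?thesis
      using em_category_circ_comp[OF assms(1) that] functor_comp[OF assms(3) \<open>X \<in> Ob C\<close>]
        em_category_circ_hom[OF assms(1)] that
      by simp
  qed
  then show ?thesis
    unfolding em_category_def
    using em_categoryD[OF assms(1)] category_pushforward[OF assms(2) functor_ob[OF assms(3)]]
      functor_is_iso[OF assms(3)]
    by simp
qed

lemma preserves_sumsD:
  assumes "preserves_sums C D Fo Fm"
  shows preserves_sums_zero: "Fo (Zero C) = Zero D"
    and preserves_sums_summable: "\<And>X Y. summable C X Y \<Longrightarrow> summable D (Fo X) (Fo Y)"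
    and preserves_sums_plus_ob:
      "\<And>X Y. summable C X Y \<Longrightarrow> Fo (PlusO C X Y) = PlusO D (Fo X) (Fo Y)"
    and preserves_sums_plus_hom: "\<And>X Y X' Y' f g. summable C X Y \<Longrightarrow> summable C X' Y' \<Longrightarrow>
      f \<in> Hom C X X' \<Longrightarrow> g \<in> Hom C Y Y' \<Longrightarrow> Fm (PlusM C f g) = PlusM D (Fm f) (Fm g)"
  using assms by (simp_all add: preserves_sums_def)

theorem lemma3p8:
  fixes C :: "('o, 'm) pcat" and D :: "('p, 'n) pcat"
    and Fo :: "'o \<Rightarrow> 'p" and Fm :: "'m \<Rightarrow> 'n"
  assumes "parsummable C" and "parsummable D"
    and "is_functor C D Fo Fm" and "preserves_sums C D Fo Fm"
  shows "parsummable (pushforward C D Fo Fm)"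
proof -
  have "em_category C" and "tame C" and "em_category D"
    using assms(1,2) by (simp_all add: parsummable_def)
  have "em_category (pushforward C D Fo Fm)"
    using em_category_pushforward[OF \<open>em_category C\<close> em_category_category assms(3)]
      \<open>em_category D\<close> .
  moreover have "Fm (Circ C u (PlusO C X Y)) = PlusM D (Fm (Circ C u X)) (Fm (Circ C u Y))"
    if "u \<in> Mon" and "summable C X Y" for u X Y
  proof -
    have "Circ C u (PlusO C X Y) = PlusM C (Circ C u X) (Circ C u Y)"
      using assms(1) that by (simp add: parsummable_def)
    then show ?thesis
      using preserves_sums_plus_hom[OF assms(4) \<open>summable C X Y\<close>
          summable_act[OF \<open>em_category C\<close> \<open>tame C\<close> that(2,1)]]
        em_category_circ_hom[OF \<open>em_category C\<close> \<open>u \<in> Mon\<close>] \<open>summable C X Y\<close>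
      by (simp add: summable_def)
  qed
  \<comment> \<open>The remaining axioms are those of C, or those of D at objects in the image of Fo.\<close>
  ultimately show ?thesis
    using assms(1,2) preserves_sumsD[OF assms(4)] functor_ob[OF assms(3)]
    unfolding parsummable_def by (simp; meson)
qed

end
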